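(* Let $\mathbf Y_i\in\mathbb R^k$ be a random vector whose law is absolutely continuous w.r.t. Lebesgue measure, has connected support and finite first moments, and let $(\alpha_0,\beta_0)$ be the population parameters (satisfying the subgradient conditions below). Let $\sigma>0$, $(\alpha,\beta)\in\mathbb R\times\mathbb R^{k-1}$, and let $b_i, W_i$ be as in the context. Then (b) $\sigma E\Big[\log\frac{f_{\boldsymbol\tau}(\mathbf Y_i\mid\alpha,\beta,\sigma)}{f_{\boldsymbol\tau}(\mathbf Y_i\mid\alpha_0,\beta_0,\sigma)}\Big]=E\big[-(W_i-b_i)1_{(b_i<W_i<0)}\big]+E\big[(W_i-b_i)1_{(0<W_i<b_i)}\big]$, and consequently (a) $E\Big[\log\frac{f_{\boldsymbol\tau}(\mathbf Y_i\mid\alpha,\beta,\sigma)}{f_{\boldsymbol\tau}(\mathbf Y_i\mid\alpha_0,\beta_0,\sigma)}\Big]\le 0$.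
   Context: Location case. Fix $\tau\in(0,1)$, $\mathbf u\in\mathcal S^{k-1}$, $\Gamma_{\mathbf u}$ a $k\times(k-1)$ matrix with $[\mathbf u\ \Gamma_{\mathbf u}]$ orthonormal, $\mathbf Y^\perp_{\mathbf u i}=\Gamma_{\mathbf u}'\mathbf Y_i$, $\rho_\tau(x)=x(\tau-1_{(x<0)})$, $f_{\boldsymbol\tau}(\mathbf Y\mid\alpha,\beta,\sigma)=\frac{\tau(1-\tau)}{\sigma}\exp\big(-\frac1\sigma\rho_\tau(\mathbf u'\mathbf Y-\alpha-\beta'\Gamma_{\mathbf u}'\mathbf Y)\big)$. $b_i=(\alpha-\alpha_0)+(\beta-\beta_0)'\mathbf Y^\perp_{\mathbf u i}$ and $W_i=(\mathbf u'-\beta_0'\Gamma_{\mathbf u}')\mathbf Y_i-\alpha_0$. The population parameters $(\alpha_0,\beta_0)$ satisfy $\Pr(W_i\le 0)=\tau$ and $E[\mathbf Y^\perp_{\mathbf u i}1_{(W_i\le0)}]=\tau E[\mathbf Y^\perp_{\mathbf u i}]$. *)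

theory Defs
  imports "HOL-Probability.Probability"
begin

definition rho :: "real \<Rightarrow> real \<Rightarrow> real" where
  "rho \<tau> x = x * (\<tau> - (if x < 0 then 1 else 0))"

text \<open>[u Gamma] is a k x k orthonormal matrix: u is a unit vector, the columns of Gamma
  (a k x (k-1) matrix, rows indexed by 'k, columns by 'm) are orthonormal and orthogonal to u,
  and CARD('k) = CARD('m) + 1.\<close>
definition orthonormal_completion :: "real^'k \<Rightarrow> real^'m^'k \<Rightarrow> bool" where
  "orthonormal_completion u \<Gamma> \<longleftrightarrow>
     CARD('k) = CARD('m) + 1 \<and> norm u = 1 \<and>
     transpose \<Gamma> ** \<Gamma> = mat 1 \<and> transpose \<Gamma> *v u = 0"

definition f_tau :: "real \<Rightarrow> real^'k \<Rightarrow> real^'m^'k \<Rightarrow> real^'k \<Rightarrow> real \<Rightarrow> real^'m \<Rightarrow> real \<Rightarrow> real" where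
  "f_tau \<tau> u \<Gamma> y \<alpha> \<beta> \<sigma> =
     \<tau> * (1 - \<tau>) / \<sigma> * exp (- (1 / \<sigma>) * rho \<tau> (u \<bullet> y - \<alpha> - \<beta> \<bullet> (transpose \<Gamma> *v y)))"

definition law_support :: "'a measure \<Rightarrow> ('a \<Rightarrow> 'b::metric_space) \<Rightarrow> 'b set" where
  "law_support M Y = {y. \<forall>e>0. measure M {x \<in> space M. Y x \<in> ball y e} > 0}"

end

theory Submission
  imports Defs
begin

text \<open>Writing the log-likelihood ratio as a difference of check losses, the expected difference
  splits into a term linear in \<open>b\<close>, which vanishes by the subgradient conditions defining
  \<open>(\<alpha>0, \<beta>0)\<close>, a term supported on the hyperplane \<open>W = 0\<close>, which is null because the law of
  \<open>Y\<close> is absolutely continuous, and two terms that are nonpositive pointwise.\<close>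

lemma AE_inner_neq_of_absolutely_continuous:
  fixes M :: "'a measure" and Y :: "'a \<Rightarrow> 'b::euclidean_space" and c :: 'b
  assumes "Y \<in> borel_measurable M" "absolutely_continuous lborel (distr M lborel Y)" "c \<noteq> 0"
  shows "AE x in M. c \<bullet> Y x \<noteq> a"
proof -
  let ?H = "{y. c \<bullet> y = a}"
  have H_borel: "?H \<in> sets lborel"
    by (simp add: borel_closed closed_hyperplane)
  have "?H \<in> null_sets lebesgue"
    using negligible_hyperplane assms(3) negligible_iff_null_sets by blast
  with H_borel have "?H \<in> null_sets lborel"
    using null_sets_completion_iff by blast
  hence "AE y in lborel. y \<notin> ?H" by (rule AE_not_in)
  hence "AE y in distr M lborel Y. y \<notin> ?H"
    using absolutely_continuous_AE[OF _ assms(2)] by simp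
  hence "AE x in M. Y x \<notin> ?H"
    using assms(1) H_borel by (subst (asm) AE_distr_iff) auto
  thus ?thesis by simp
qed

lemma inner_transpose_mult_vec:
  "(v::real^'m) \<bullet> (transpose (A::real^'m^'k) *v y) = (A *v v) \<bullet> y"
  by (metis dot_lmul_matrix inner_commute transpose_matrix_vector)

lemma orthonormal_completion_diff_nonzero:
  assumes "orthonormal_completion u \<Gamma>"
  shows "u - \<Gamma> *v v \<noteq> 0"
proof
  assume "u - \<Gamma> *v v = 0"
  hence u: "u = \<Gamma> *v v" by simp
  have "transpose \<Gamma> *v u = (transpose \<Gamma> ** \<Gamma>) *v v"
    unfolding u by (simp add: matrix_vector_mul_assoc)
  hence "v = 0" using assms unfolding orthonormal_completion_def by simp
  thus False using assms u unfolding orthonormal_completion_def by simp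
qed

lemma ln_f_tau_ratio:
  assumes "0 < \<tau>" "\<tau> < 1" "0 < \<sigma>"
  shows "\<sigma> * ln (f_tau \<tau> u \<Gamma> y \<alpha> \<beta> \<sigma> / f_tau \<tau> u \<Gamma> y \<alpha>0 \<beta>0 \<sigma>)
    = rho \<tau> (u \<bullet> y - \<alpha>0 - \<beta>0 \<bullet> (transpose \<Gamma> *v y)) - rho \<tau> (u \<bullet> y - \<alpha> - \<beta> \<bullet> (transpose \<Gamma> *v y))"
proof -
  define p where "p = rho \<tau> (u \<bullet> y - \<alpha> - \<beta> \<bullet> (transpose \<Gamma> *v y))"
  define q where "q = rho \<tau> (u \<bullet> y - \<alpha>0 - \<beta>0 \<bullet> (transpose \<Gamma> *v y))"
  define C where "C = \<tau> * (1 - \<tau>) / \<sigma>"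
  have "0 < C" using assms by (simp add: C_def)
  hence "f_tau \<tau> u \<Gamma> y \<alpha> \<beta> \<sigma> / f_tau \<tau> u \<Gamma> y \<alpha>0 \<beta>0 \<sigma> = exp (- (1/\<sigma>) * p - (- (1/\<sigma>) * q))"
    unfolding f_tau_def C_def[symmetric] p_def[symmetric] q_def[symmetric]
    by (simp add: exp_diff exp_minus field_simps)
  also have "\<dots> = exp ((q - p) / \<sigma>)" by (simp add: diff_divide_distrib)
  finally have "f_tau \<tau> u \<Gamma> y \<alpha> \<beta> \<sigma> / f_tau \<tau> u \<Gamma> y \<alpha>0 \<beta>0 \<sigma> = exp ((q - p) / \<sigma>)" .
  thus ?thesis using assms by (simp add: p_def q_def)
qed

text \<open>Knight's identity with its integral evaluated; the last summand lives on \<open>w = 0\<close>.\<close>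
lemma rho_diff_decomposition:
  "rho \<tau> w - rho \<tau> (w - b)
     = (\<tau> * b - (if w \<le> 0 then b else 0))
       + (if b < w \<and> w < 0 then - (w - b) else 0)
       + (if 0 < w \<and> w < b then w - b else 0)
       + (if w = 0 \<and> b \<le> 0 then b else 0)"
  unfolding rho_def by (auto simp: algebra_simps)

lemma integral_check_loss_difference:
  fixes W b :: "'a \<Rightarrow> real"
  assumes "prob_space M" "integrable M W" "integrable M b"
    and "AE x in M. W x \<noteq> 0"
    and "integral\<^sup>L M (\<lambda>x. indicator {x \<in> space M. W x \<le> 0} x * b x) = \<tau> * integral\<^sup>L M b"
  shows "integral\<^sup>L M (\<lambda>x. rho \<tau> (W x) - rho \<tau> (W x - b x))
           = integral\<^sup>L M (\<lambda>x. if b x < W x \<and> W x < 0 then - (W x - b x) else 0)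
             + integral\<^sup>L M (\<lambda>x. if 0 < W x \<and> W x < b x then W x - b x else 0)"
proof -
  define S where "S = {x \<in> space M. W x \<le> 0}"
  define g where "g = (\<lambda>x. \<tau> * b x - indicator S x * b x)"
  define h1 where "h1 = (\<lambda>x. if b x < W x \<and> W x < 0 then - (W x - b x) else 0)"
  define h2 where "h2 = (\<lambda>x. if 0 < W x \<and> W x < b x then W x - b x else 0)"
  define e where "e = (\<lambda>x. if W x = 0 \<and> b x \<le> 0 then b x else 0)"
  have mW: "W \<in> borel_measurable M" and mb: "b \<in> borel_measurable M"
    using assms(2,3) by auto
  have S: "S \<in> sets M" unfolding S_def using mW by measurable
  have int_bS: "integrable M (\<lambda>x. indicator S x * b x)"
    using integrable_mult_indicator[OF S assms(3)] by simp
  have bounded: "integrable M f"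
    if "f \<in> borel_measurable M" "\<And>x. \<bar>f x\<bar> \<le> \<bar>W x\<bar> + \<bar>b x\<bar>" for f
    by (rule Bochner_Integration.integrable_bound[where f="\<lambda>x. \<bar>W x\<bar> + \<bar>b x\<bar>"])
       (use that assms(2,3) in auto)
  have int_h1: "integrable M h1" and int_h2: "integrable M h2" and int_e: "integrable M e"
    unfolding h1_def h2_def e_def by (rule bounded; use mW mb in auto)+
  have int_g: "integrable M g" unfolding g_def using assms(3) int_bS by auto
  have "integral\<^sup>L M g = 0"
    unfolding g_def using assms(3,5) int_bS by (simp add: S_def)
  moreover have "integral\<^sup>L M e = 0"
    by (rule integral_eq_zero_AE) (use assms(4) in \<open>auto simp: e_def\<close>)
  moreover have "integral\<^sup>L M (\<lambda>x. rho \<tau> (W x) - rho \<tau> (W x - b x))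
      = integral\<^sup>L M (\<lambda>x. g x + h1 x + h2 x + e x)"
    by (rule Bochner_Integration.integral_cong)
       (auto simp: rho_diff_decomposition g_def h1_def h2_def e_def S_def)
  ultimately show ?thesis
    using int_g int_h1 int_h2 int_e by (simp add: h1_def h2_def)
qed

lemma integral_indicator_mult_affine:
  fixes Z :: "'a \<Rightarrow> 'b::euclidean_space"
  assumes "prob_space M" "integrable M Z" "S \<in> sets M" "measure M S = \<tau>"
    and "integral\<^sup>L M (\<lambda>x. indicator S x *\<^sub>R Z x) = \<tau> *\<^sub>R integral\<^sup>L M Z"
  shows "integral\<^sup>L M (\<lambda>x. indicator S x * (a + v \<bullet> Z x)) = \<tau> * integral\<^sup>L M (\<lambda>x. a + v \<bullet> Z x)"
proof -
  interpret prob_space M by fact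
  have int_SZ: "integrable M (\<lambda>x. indicator S x *\<^sub>R Z x)"
    using integrable_mult_indicator[OF assms(3,2)] .
  have int_S: "integrable M (\<lambda>x. a * indicator S x)"
    using assms(3) by (intro integrable_mult_right integrable_real_indicator) (auto simp: less_top[symmetric])
  have "integral\<^sup>L M (\<lambda>x. indicator S x * (a + v \<bullet> Z x))
      = integral\<^sup>L M (\<lambda>x. a * indicator S x + v \<bullet> (indicator S x *\<^sub>R Z x))"
    by (simp add: algebra_simps)
  also have "\<dots> = integral\<^sup>L M (\<lambda>x. a * indicator S x)
                   + integral\<^sup>L M (\<lambda>x. v \<bullet> (indicator S x *\<^sub>R Z x))"
    by (rule Bochner_Integration.integral_add[OF int_S integrable_inner_right[OF int_SZ]])
  also have "\<dots> = a * \<tau> + v \<bullet> integral\<^sup>L M (\<lambda>x. indicator S x *\<^sub>R Z x)"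
    using integral_inner_right[OF int_SZ, of v] assms(3,4) by simp
  also have "\<dots> = \<tau> * (a + v \<bullet> integral\<^sup>L M Z)"
    by (simp add: assms(5) algebra_simps)
  also have "\<dots> = \<tau> * integral\<^sup>L M (\<lambda>x. a + v \<bullet> Z x)"
    using assms(2) by (simp add: prob_space)
  finally show ?thesis .
qed

theorem lemma2:
  fixes M :: "'a measure" and Y :: "'a \<Rightarrow> real^'k"
    and u :: "real^'k" and \<Gamma> :: "real^'m^'k"
    and \<tau> \<sigma> \<alpha> \<alpha>0 :: real and \<beta> \<beta>0 :: "real^'m"
  assumes "prob_space M"
    and "Y \<in> borel_measurable M"
    and "absolutely_continuous lborel (distr M lborel Y)"
    and "connected (law_support M Y)"
    and "integrable M (\<lambda>x. norm (Y x))"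
    and "0 < \<tau>" and "\<tau> < 1"
    and "orthonormal_completion u \<Gamma>"
    and "measure M {x \<in> space M. (u \<bullet> Y x - \<beta>0 \<bullet> (transpose \<Gamma> *v Y x)) - \<alpha>0 \<le> 0} = \<tau>"
    and "integral\<^sup>L M (\<lambda>x. indicator {x \<in> space M. (u \<bullet> Y x - \<beta>0 \<bullet> (transpose \<Gamma> *v Y x)) - \<alpha>0 \<le> 0} x
                            *\<^sub>R (transpose \<Gamma> *v Y x))
         = \<tau> *\<^sub>R integral\<^sup>L M (\<lambda>x. transpose \<Gamma> *v Y x)"
    and "0 < \<sigma>"
  defines "b \<equiv> \<lambda>x. (\<alpha> - \<alpha>0) + (\<beta> - \<beta>0) \<bullet> (transpose \<Gamma> *v Y x)"
    and "W \<equiv> \<lambda>x. (u \<bullet> Y x - \<beta>0 \<bullet> (transpose \<Gamma> *v Y x)) - \<alpha>0"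
  shows "\<sigma> * integral\<^sup>L M (\<lambda>x. ln (f_tau \<tau> u \<Gamma> (Y x) \<alpha> \<beta> \<sigma> / f_tau \<tau> u \<Gamma> (Y x) \<alpha>0 \<beta>0 \<sigma>))
           = integral\<^sup>L M (\<lambda>x. if b x < W x \<and> W x < 0 then - (W x - b x) else 0)
             + integral\<^sup>L M (\<lambda>x. if 0 < W x \<and> W x < b x then W x - b x else 0)
       \<and> integral\<^sup>L M (\<lambda>x. ln (f_tau \<tau> u \<Gamma> (Y x) \<alpha> \<beta> \<sigma> / f_tau \<tau> u \<Gamma> (Y x) \<alpha>0 \<beta>0 \<sigma>)) \<le> 0"
proof -
  interpret prob_space M by fact
  let ?lr = "\<lambda>x. ln (f_tau \<tau> u \<Gamma> (Y x) \<alpha> \<beta> \<sigma> / f_tau \<tau> u \<Gamma> (Y x) \<alpha>0 \<beta>0 \<sigma>)"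
  let ?h1 = "\<lambda>x. if b x < W x \<and> W x < 0 then - (W x - b x) else 0"
  let ?h2 = "\<lambda>x. if 0 < W x \<and> W x < b x then W x - b x else 0"
  have int_Y: "integrable M Y" using assms(2,5) integrable_norm_iff by blast
  have int_Z: "integrable M (\<lambda>x. transpose \<Gamma> *v Y x)"
    using integrable_bounded_linear[OF matrix_vector_mul_bounded_linear int_Y] by blast
  have W_inner: "W x = (u - \<Gamma> *v \<beta>0) \<bullet> Y x - \<alpha>0" for x
    unfolding W_def inner_transpose_mult_vec by (simp add: inner_diff_left)
  have int_W: "integrable M W" unfolding W_inner using int_Y
    by (intro Bochner_Integration.integrable_diff integrable_inner_right) auto
  have int_b: "integrable M b" unfolding b_def using int_Z by (simp add: prob_space)
  have S: "{x \<in> space M. W x \<le> 0} \<in> sets M"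
    using int_W by measurable
  have "integral\<^sup>L M (\<lambda>x. indicator {x \<in> space M. W x \<le> 0} x * b x) = \<tau> * integral\<^sup>L M b"
    using integral_indicator_mult_affine[OF assms(1) int_Z S, of \<tau> "\<alpha> - \<alpha>0" "\<beta> - \<beta>0"] assms(9,10)
    unfolding W_def b_def by simp
  moreover have "AE x in M. W x \<noteq> 0"
    using AE_inner_neq_of_absolutely_continuous[OF assms(2,3) orthonormal_completion_diff_nonzero[OF assms(8)]]
    by (simp add: W_inner)
  moreover have "\<sigma> * integral\<^sup>L M ?lr = integral\<^sup>L M (\<lambda>x. rho \<tau> (W x) - rho \<tau> (W x - b x))"
    unfolding integral_mult_right_zero[symmetric] ln_f_tau_ratio[OF assms(6,7,11)]
    by (simp add: W_def b_def inner_diff_left algebra_simps)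
  ultimately have identity: "\<sigma> * integral\<^sup>L M ?lr = integral\<^sup>L M ?h1 + integral\<^sup>L M ?h2"
    using integral_check_loss_difference[OF assms(1) int_W int_b] by simp
  have "0 \<le> integral\<^sup>L M (\<lambda>x. - ?h1 x)" by (rule Bochner_Integration.integral_nonneg) auto
  moreover have "0 \<le> integral\<^sup>L M (\<lambda>x. - ?h2 x)" by (rule Bochner_Integration.integral_nonneg) auto
  ultimately have "\<sigma> * integral\<^sup>L M ?lr \<le> 0"
    using identity by simp
  with assms(11) have "integral\<^sup>L M ?lr \<le> 0"
    by (simp add: mult_le_0_iff)
  with identity show ?thesis by simp
qed

end
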